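(* For $f>1$ let $h^*=h^*(f)>1$ and $h_*=h_*(f)\in(0,1)$ be the two solutions $h$ of $h-\log h=f$, and define $$j^*(f)=\frac1{h^*-1}-\frac1{(2(f-1))^{1/2}},\qquad j_*(f)=\frac1{1-h_*}-\frac1{(2(f-1))^{1/2}}.$$ Then: (a) as $f\to1$, $j^*\to-\frac13$ and $j_*\to\frac13$; (b) $\frac{dj^*}{df}>0$ and $\frac{dj_*}{df}>0$ for $f>1$, and $\frac{dj^*}{df}=O((f-1)^{-1/2})$, $\frac{dj_*}{df}=O((f-1)^{-1/2})$ as $f\to1$; (c) $\frac{d^2j^*}{df^2}<0$ and $\frac{d^2j_*}{df^2}<0$ for $f>1$; (d) the function $j^*+j_*=\frac1{h^*-1}+\frac1{1-h_*}-\big(\frac2{f-1}\big)^{1/2}$ satisfies $\frac{d(j^*+j_* )}{df}>0$ and $\frac{d^2(j^*+j_* )}{df^2}<0$ for $f>1$, and $j^*+j_*\to0$, $\frac{d(j^*+j_* )}{df}=O((f-1)^{-1/2})$ as $f\to1$; (e) $0<j^*+j_*<1$ for $f>1$. *)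

theory Defs
  imports "HOL-Analysis.Analysis" "HOL-Library.Landau_Symbols"
begin

definition h_up :: "real \<Rightarrow> real" where
  "h_up f = (THE h. h > 1 \<and> h - ln h = f)"

definition h_lo :: "real \<Rightarrow> real" where
  "h_lo f = (THE h. 0 < h \<and> h < 1 \<and> h - ln h = f)"

definition j_up :: "real \<Rightarrow> real" where
  "j_up f = 1 / (h_up f - 1) - 1 / sqrt (2 * (f - 1))"

definition j_lo :: "real \<Rightarrow> real" where
  "j_lo f = 1 / (1 - h_lo f) - 1 / sqrt (2 * (f - 1))"

end

theory Submission
  imports Defs "HOL-Real_Asymp.Real_Asymp"
begin

text \<open>Parametrise both branches by h, so that f = h - ln h and s = sqrt (2 (f - 1)) =
  sqrt (2 (h - ln h - 1)). Then j_up and j_lo are both 1/|h - 1| - 1/s, and since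
  dh/df = h/(h - 1) their f-derivatives are 1/s^3 - h/|h - 1|^3 and
  -3/s^5 + h(2h + 1)/|h - 1|^5. Parts (b) and (c) thus reduce to
  h s^3 < |h - 1|^3 and h(2h + 1) s^5 < 3 |h - 1|^5 for all h > 0, h \<noteq> 1.
  Both follow from s < |h - 1| \<rho>(h) with \<rho>(h)^5 = 3/(h(2h + 1)), the first together with
  \<rho>(h)^3 \<le> 1/h. That bound says that ln h - (h - 1) + (h - 1)^2 \<rho>(h)^2/2 is positive; it
  vanishes at h = 1 and its derivative has the sign of h - 1, by a polynomial inequality.
  The limits and O-bounds are expansions in h at h = 1, and (e) follows from the
  monotonicity of j_up + j_lo and its limits 0 as f \<rightarrow> 1 and 1 as f \<rightarrow> \<infinity>.\<close>

lemma x_minus_ln_less_mono: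
  fixes a b :: real
  assumes "1 \<le> a" "a < b"
  shows "a - ln a < b - ln b"
proof (rule DERIV_pos_imp_increasing_open[OF assms(2)])
  fix x assume "a < x" "x < b"
  then have "1 < x" using assms by simp
  then show "\<exists>y. ((\<lambda>x. x - ln x) has_real_derivative y) (at x) \<and> 0 < y"
    by (intro exI[of _ "1 - 1/x"]) (auto intro!: derivative_eq_intros)
next
  show "continuous_on {a..b} (\<lambda>x. x - ln x)" using assms by (intro continuous_intros) auto
qed

lemma x_minus_ln_less_antimono:
  fixes a b :: real
  assumes "0 < a" "a < b" "b \<le> 1"
  shows "b - ln b < a - ln a"
proof (rule DERIV_neg_imp_decreasing_open[OF assms(2)])
  fix x assume "a < x" "x < b"
  then have "0 < x" "x < 1" using assms by simp_all
  then show "\<exists>y. ((\<lambda>x. x - ln x) has_real_derivative y) (at x) \<and> y < 0"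
    by (intro exI[of _ "1 - 1/x"]) (auto intro!: derivative_eq_intros simp: field_simps)
next
  show "continuous_on {a..b} (\<lambda>x. x - ln x)" using assms by (intro continuous_intros) auto
qed

lemma x_minus_ln_gt_1:
  fixes h :: real
  assumes "0 < h" "h \<noteq> 1"
  shows "1 < h - ln h"
  using x_minus_ln_less_mono[of 1 h] x_minus_ln_less_antimono[of h 1] assms
  by (cases "h < 1") auto

lemma x_minus_ln_surj_gt_1:
  fixes f :: real
  assumes "1 < f"
  obtains h where "1 < h" "h - ln h = f"
proof -
  have "f \<le> 2*f - ln (2*f)"
    using assms ln_le_minus_one[of f] ln_2_less_1 by (simp add: ln_mult)
  moreover have "\<forall>x. 1 \<le> x \<and> x \<le> 2*f \<longrightarrow> isCont (\<lambda>x. x - ln x) x"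
    by (auto intro!: continuous_intros)
  ultimately obtain h where "1 \<le> h" "h - ln h = f"
    using IVT[of "\<lambda>x. x - ln x" 1 f "2*f"] assms by auto
  moreover have "h \<noteq> 1" using assms \<open>h - ln h = f\<close> by auto
  ultimately show thesis using that[of h] by simp
qed

lemma x_minus_ln_surj_lt_1:
  fixes f :: real
  assumes "1 < f"
  obtains h where "0 < h" "h < 1" "h - ln h = f"
proof -
  have "exp (-f) \<le> 1" using assms by simp
  moreover have "\<forall>x. exp (-f) \<le> x \<and> x \<le> 1 \<longrightarrow> isCont (\<lambda>x. x - ln x) x"
    using exp_gt_zero[of "-f"] by (auto intro!: continuous_intros)
  ultimately obtain h where "exp (-f) \<le> h" "h \<le> 1" "h - ln h = f"
    using IVT2[of "\<lambda>x. x - ln x" 1 f "exp (-f)"] assms by auto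
  moreover have "h \<noteq> 1" using assms \<open>h - ln h = f\<close> by auto
  moreover have "0 < h" using \<open>exp (-f) \<le> h\<close> exp_gt_zero order.strict_trans2 by blast
  ultimately show thesis using that[of h] by simp
qed

lemma inj_on_x_minus_ln_ge_1: "inj_on (\<lambda>x::real. x - ln x) {1..}"
  using x_minus_ln_less_mono by (intro linorder_inj_onI') fastforce

lemma inj_on_x_minus_ln_le_1: "inj_on (\<lambda>x::real. x - ln x) {0<..1}"
  using x_minus_ln_less_antimono by (intro linorder_inj_onI') fastforce

lemma h_up_props:
  assumes "1 < f"
  shows "1 < h_up f" "h_up f - ln (h_up f) = f"
proof -
  obtain h where h: "1 < h" "h - ln h = f" using x_minus_ln_surj_gt_1[OF assms] .
  have "\<exists>!h. 1 < h \<and> h - ln h = f"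
  proof (rule ex1I[of _ h])
    show "y = h" if "1 < y \<and> y - ln y = f" for y
      using inj_onD[OF inj_on_x_minus_ln_ge_1, of y h] that h by simp
  qed (use h in simp)
  from theI'[OF this] show "1 < h_up f" "h_up f - ln (h_up f) = f"
    unfolding h_up_def by auto
qed

lemma h_lo_props:
  assumes "1 < f"
  shows "0 < h_lo f" "h_lo f < 1" "h_lo f - ln (h_lo f) = f"
proof -
  obtain h where h: "0 < h" "h < 1" "h - ln h = f" using x_minus_ln_surj_lt_1[OF assms] .
  have "\<exists>!h. 0 < h \<and> h < 1 \<and> h - ln h = f"
  proof (rule ex1I[of _ h])
    show "y = h" if "0 < y \<and> y < 1 \<and> y - ln y = f" for y
      using inj_onD[OF inj_on_x_minus_ln_le_1, of y h] that h by simp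
  qed (use h in simp)
  from theI'[OF this] show "0 < h_lo f" "h_lo f < 1" "h_lo f - ln (h_lo f) = f"
    unfolding h_lo_def by auto
qed

lemma h_up_x_minus_ln:
  assumes "1 < h"
  shows "h_up (h - ln h) = h"
proof -
  have f: "1 < h - ln h" using x_minus_ln_gt_1 assms by simp
  show ?thesis
    using h_up_props[OF f] inj_onD[OF inj_on_x_minus_ln_ge_1, of "h_up (h - ln h)" h] assms by simp
qed

lemma h_lo_x_minus_ln:
  assumes "0 < h" "h < 1"
  shows "h_lo (h - ln h) = h"
proof -
  have f: "1 < h - ln h" using x_minus_ln_gt_1 assms by simp
  show ?thesis
    using h_lo_props[OF f] inj_onD[OF inj_on_x_minus_ln_le_1, of "h_lo (h - ln h)" h] assms by simp
qed

lemma local_inverse_x_minus_ln_has_derivative: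
  fixes H :: "real \<Rightarrow> real"
  assumes "0 < d" and local_inv: "\<And>z. \<bar>z - H f\<bar> \<le> d \<Longrightarrow> 0 < z \<and> H (z - ln z) = z"
    and inv: "\<And>y. 1 < y \<Longrightarrow> H y - ln (H y) = y" and "1 < f"
  shows "(H has_real_derivative H f / (H f - 1)) (at f)"
proof -
  have "0 < H f" using local_inv[of "H f"] \<open>0 < d\<close> by simp
  moreover have "H f \<noteq> 1" using inv[OF \<open>1 < f\<close>] \<open>1 < f\<close> by auto
  moreover have "isCont H f"
  proof -
    have "isCont H (H f - ln (H f))"
      by (rule isCont_inverse_function[OF \<open>0 < d\<close>])
         (use local_inv in \<open>auto intro!: continuous_intros\<close>)
    then show ?thesis using inv[OF \<open>1 < f\<close>] by simp
  qed
  ultimately have "(H has_real_derivative inverse (1 - 1 / H f)) (at f)"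
    using inv \<open>1 < f\<close>
    by (intro DERIV_inverse_function[where f = "\<lambda>x. x - ln x" and a = 1 and b = "f + 1"])
       (auto intro!: derivative_eq_intros)
  then show ?thesis
    using \<open>0 < H f\<close> \<open>H f \<noteq> 1\<close> by (simp add: field_simps)
qed

lemma h_up_has_derivative:
  assumes "1 < f"
  shows "(h_up has_real_derivative h_up f / (h_up f - 1)) (at f)"
proof (rule local_inverse_x_minus_ln_has_derivative[where d = "(h_up f - 1) / 2"])
  show "0 < (h_up f - 1) / 2" using h_up_props(1)[OF assms] by simp
  fix z assume "\<bar>z - h_up f\<bar> \<le> (h_up f - 1) / 2"
  then have "1 < z" using abs_le_D2 h_up_props(1)[OF assms] by fastforce
  then show "0 < z \<and> h_up (z - ln z) = z" using h_up_x_minus_ln by simp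
qed (use h_up_props assms in auto)

lemma h_lo_has_derivative:
  assumes "1 < f"
  shows "(h_lo has_real_derivative h_lo f / (h_lo f - 1)) (at f)"
proof (rule local_inverse_x_minus_ln_has_derivative[where d = "min (h_lo f) (1 - h_lo f) / 2"])
  show "0 < min (h_lo f) (1 - h_lo f) / 2" using h_lo_props(1,2)[OF assms] by simp
  fix z assume "\<bar>z - h_lo f\<bar> \<le> min (h_lo f) (1 - h_lo f) / 2"
  then have "0 < z" "z < 1" using abs_le_D1 abs_le_D2 h_lo_props(1,2)[OF assms] by fastforce+
  then show "0 < z \<and> h_lo (z - ln z) = z" using h_lo_x_minus_ln by simp
qed (use h_lo_props assms in auto)

lemma h_up_at_right_1: "filterlim h_up (at_right 1) (at_right 1)"
proof -
  have "(h_up \<longlongrightarrow> 1) (at_right 1)"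
  proof (rule order_tendstoI)
    fix a :: real assume "a < 1"
    show "eventually (\<lambda>f. a < h_up f) (at_right 1)"
      using eventually_at_right_less[of 1] by eventually_elim (use h_up_props \<open>a < 1\<close> in force)
  next
    fix a :: real assume "1 < a"
    then have "eventually (\<lambda>f. f \<in> {1<..<a - ln a}) (at_right 1)"
      using x_minus_ln_gt_1[of a] by (intro eventually_at_right_real) auto
    then show "eventually (\<lambda>f. h_up f < a) (at_right 1)"
    proof eventually_elim
      case (elim f)
      then show ?case
        using h_up_props[of f] x_minus_ln_less_mono[of a "h_up f"] \<open>1 < a\<close>
        by (cases "h_up f" a rule: linorder_cases) auto
    qed
  qed
  moreover have "eventually (\<lambda>f. 1 < h_up f) (at_right 1)"
    using eventually_at_right_less[of 1] by eventually_elim (use h_up_props in auto)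
  ultimately show ?thesis by (rule tendsto_imp_filterlim_at_right)
qed

lemma h_lo_at_right_1: "filterlim h_lo (at_left 1) (at_right 1)"
proof -
  have "(h_lo \<longlongrightarrow> 1) (at_right 1)"
  proof (rule order_tendstoI)
    fix a :: real assume "1 < a"
    show "eventually (\<lambda>f. h_lo f < a) (at_right 1)"
      using eventually_at_right_less[of 1] by eventually_elim (use h_lo_props \<open>1 < a\<close> in force)
  next
    fix a :: real assume "a < 1"
    define b where "b = max a (1/2)"
    have "0 < b" "a \<le> b" "b < 1" using \<open>a < 1\<close> by (auto simp: b_def)
    then have "eventually (\<lambda>f. f \<in> {1<..<b - ln b}) (at_right 1)"
      using x_minus_ln_gt_1[of b] by (intro eventually_at_right_real) auto
    then show "eventually (\<lambda>f. a < h_lo f) (at_right 1)"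
    proof eventually_elim
      case (elim f)
      then show ?case
        using h_lo_props[of f] x_minus_ln_less_antimono[of "h_lo f" b] \<open>0 < b\<close> \<open>a \<le> b\<close> \<open>b < 1\<close>
        by (cases "h_lo f" b rule: linorder_cases) auto
    qed
  qed
  moreover have "eventually (\<lambda>f. h_lo f < 1) (at_right 1)"
    using eventually_at_right_less[of 1] by eventually_elim (use h_lo_props in auto)
  ultimately show ?thesis by (rule tendsto_imp_filterlim_at_left)
qed

definition rho :: "real \<Rightarrow> real" where
  "rho h = exp ((ln 3 - ln h - ln (2*h + 1)) / 5)"

lemma rho_pos: "0 < h \<Longrightarrow> 0 < rho h"
  by (simp add: rho_def)

lemma rho_pow_5:
  assumes "0 < h"
  shows "rho h ^ 5 = 3 / (h * (2*h + 1))"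
proof -
  have "rho h ^ 5 = exp (ln 3 - ln h - ln (2*h + 1))"
    unfolding rho_def by (simp flip: exp_of_nat_mult)
  then show ?thesis using assms by (simp add: exp_diff)
qed

lemma rho_has_derivative:
  assumes "0 < h"
  shows "(rho has_real_derivative rho h * (- 1/h - 2/(2*h + 1)) / 5) (at h)"
  unfolding rho_def using assms by (auto intro!: derivative_eq_intros)

lemma rho_sq_lower_bound:
  assumes "0 < h" "h \<noteq> 1"
  shows "5 * (2*h + 1) < rho h ^ 2 * (6*h^2 + 8*h + 1)"
proof -
  define Q where "Q = 9 + 378*h + 3652*h^2 + 17896*h^3 + 60880*h^4 + 154496*h^5
    + 245552*h^6 + 206528*h^7 + 69984*h^8"
  have "9 * (6*h^2 + 8*h + 1)^5 - 3125 * (2*h + 1)^5 * (h^2 * (2*h + 1)^2) = (h - 1)^2 * Q"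
    unfolding Q_def by algebra
  moreover have "0 < Q" unfolding Q_def using assms by (intro add_pos_pos add_pos_nonneg) auto
  ultimately have "3125 * (2*h + 1)^5 * (h^2 * (2*h + 1)^2) < 9 * (6*h^2 + 8*h + 1)^5"
    using assms by (smt (verit) mult_pos_pos zero_less_power2)
  moreover have pos: "0 < 6*h^2 + 8*h + 1" using assms by (simp add: add_pos_pos)
  ultimately have lt: "3125 * (2*h + 1)^5 / (6*h^2 + 8*h + 1)^5 < 9 / (h^2 * (2*h + 1)^2)"
    using assms pos by (simp add: divide_simps)
  have "(5 * (2*h + 1) / (6*h^2 + 8*h + 1)) ^ 5 = 3125 * (2*h + 1)^5 / (6*h^2 + 8*h + 1)^5"
    unfolding power_divide power_mult_distrib by simp
  also have "\<dots> < 9 / (h^2 * (2*h + 1)^2)" by (rule lt)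
  also have "\<dots> = (rho h ^ 5) ^ 2"
    using rho_pow_5[OF assms(1)] by (simp add: power_divide power_mult_distrib)
  also have "\<dots> = (rho h ^ 2) ^ 5"
    by (simp flip: power_mult add: mult.commute)
  finally have "5 * (2*h + 1) / (6*h^2 + 8*h + 1) < rho h ^ 2"
    by (rule power_less_imp_less_base) simp
  then show ?thesis using pos by (simp add: divide_simps)
qed

lemma two_x_minus_ln_less:
  assumes "0 < h" "h \<noteq> 1"
  shows "2 * (h - ln h - 1) < (h - 1)^2 * rho h ^ 2"
proof -
  define \<Phi> where "\<Phi> x = ln x - (x - 1) + (x - 1)^2 * rho x ^ 2 / 2" for x
  define \<sigma> where "\<sigma> x = (rho x ^ 2 * (6*x^2 + 8*x + 1) - 5 * (2*x + 1)) / (5 * x * (2*x + 1))"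
    for x
  have \<Phi>_deriv: "(\<Phi> has_real_derivative (x - 1) * \<sigma> x) (at x)" if "0 < x" for x
  proof -
    have "(\<Phi> has_real_derivative 1/x - 1 + 2 * (x - 1) * rho x ^ 2 / 2
        + (x - 1)^2 * (2 * rho x * (rho x * (- 1/x - 2/(2*x + 1)) / 5)) / 2) (at x)"
      unfolding \<Phi>_def using that by (auto intro!: derivative_eq_intros rho_has_derivative)
    moreover have "0 < 2*x + 1" using that by simp
    ultimately show ?thesis
      using that unfolding \<sigma>_def
      by (elim DERIV_cong) (simp add: divide_simps power2_eq_square, simp add: algebra_simps)
  qed
  have \<sigma>_pos: "0 < \<sigma> x" if "0 < x" "x \<noteq> 1" for x
    using rho_sq_lower_bound[OF that] that unfolding \<sigma>_def by simp
  have cont: "continuous_on {a..b} \<Phi>" if "0 < a" for a b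
    unfolding \<Phi>_def rho_def using that by (intro continuous_intros) auto
  have "\<Phi> 1 < \<Phi> h"
  proof (cases "1 < h")
    case True
    show ?thesis
    proof (rule DERIV_pos_imp_increasing_open[OF True _ cont])
      fix x assume "1 < x" "x < h"
      then show "\<exists>y. (\<Phi> has_real_derivative y) (at x) \<and> 0 < y"
        using \<Phi>_deriv[of x] \<sigma>_pos[of x] by (intro exI[of _ "(x - 1) * \<sigma> x"]) auto
    qed simp
  next
    case False
    then have "h < 1" using assms by simp
    show ?thesis
    proof (rule DERIV_neg_imp_decreasing_open[OF \<open>h < 1\<close> _ cont[OF assms(1)]])
      fix x assume "h < x" "x < 1"
      then show "\<exists>y. (\<Phi> has_real_derivative y) (at x) \<and> y < 0"
        using \<Phi>_deriv[of x] \<sigma>_pos[of x] assms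
        by (intro exI[of _ "(x - 1) * \<sigma> x"]) (auto intro!: mult_neg_pos)
    qed
  qed
  then show ?thesis by (simp add: \<Phi>_def)
qed

lemma sqrt_two_x_minus_ln_less:
  assumes "0 < h" "h \<noteq> 1"
  shows "sqrt (2 * (h - ln h - 1)) < \<bar>h - 1\<bar> * rho h"
proof -
  have "sqrt (2 * (h - ln h - 1)) < sqrt ((\<bar>h - 1\<bar> * rho h)^2)"
    using two_x_minus_ln_less[OF assms] by (simp add: power_mult_distrib)
  then show ?thesis using rho_pos[OF assms(1)] by simp
qed

lemma rho_cube_le:
  assumes "0 < h"
  shows "rho h ^ 3 \<le> 1 / h"
proof (rule power_le_imp_le_base[where n = 4])
  have "27 * h^2 \<le> (2*h + 1)^3"
  proof -
    have "(2*h + 1)^3 - 27 * h^2 = (h - 1)^2 * (8*h + 1)" by algebra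
    then show ?thesis using assms by (smt (verit) mult_nonneg_nonneg zero_le_power2)
  qed
  then have "27 * h^5 \<le> h^3 * (2*h + 1)^3"
    using mult_left_mono[of "27 * h^2" "(2*h + 1)^3" "h^3"] assms
    by (simp add: algebra_simps flip: power_add)
  then have bound: "27 / (h * (2*h + 1))^3 \<le> (1 / h) ^ 5"
    using assms by (simp add: divide_simps power_mult_distrib)
  have "(rho h ^ 3) ^ Suc 4 = (rho h ^ 5) ^ 3" by (simp flip: power_mult)
  also have "\<dots> = 27 / (h * (2*h + 1))^3" using rho_pow_5[OF assms] by (simp add: power_divide)
  finally show "(rho h ^ 3) ^ Suc 4 \<le> (1 / h) ^ Suc 4" using bound by simp
qed (use assms in simp)

text \<open>The branches as functions of h (see j_up_eq_j_par, j_lo_eq_j_par), and their first and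
  second derivatives with respect to f = h - ln h (see j_branch_has_derivatives).\<close>

definition j_par :: "real \<Rightarrow> real" where
  "j_par h = 1 / \<bar>h - 1\<bar> - 1 / sqrt (2 * (h - ln h - 1))"

definition dj_par :: "real \<Rightarrow> real" where
  "dj_par h = 1 / sqrt (2 * (h - ln h - 1)) ^ 3 - h / \<bar>h - 1\<bar> ^ 3"

definition d2j_par :: "real \<Rightarrow> real" where
  "d2j_par h = - 3 / sqrt (2 * (h - ln h - 1)) ^ 5 + h * (2*h + 1) / \<bar>h - 1\<bar> ^ 5"

lemma dj_par_pos:
  assumes "0 < h" "h \<noteq> 1"
  shows "0 < dj_par h"
proof -
  define s where "s = sqrt (2 * (h - ln h - 1))"
  have "0 < s" using x_minus_ln_gt_1[OF assms] by (simp add: s_def)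
  have "s ^ 3 < (\<bar>h - 1\<bar> * rho h) ^ 3"
    using sqrt_two_x_minus_ln_less[OF assms] \<open>0 < s\<close> unfolding s_def
    by (intro power_strict_mono) auto
  also have "\<dots> \<le> \<bar>h - 1\<bar> ^ 3 * (1 / h)"
    using mult_left_mono[OF rho_cube_le[OF assms(1)], of "\<bar>h - 1\<bar> ^ 3"]
    by (simp add: power_mult_distrib)
  finally show ?thesis
    using \<open>0 < s\<close> assms unfolding dj_par_def s_def[symmetric]
    by (simp add: divide_simps mult.commute)
qed

lemma d2j_par_neg:
  assumes "0 < h" "h \<noteq> 1"
  shows "d2j_par h < 0"
proof -
  define s where "s = sqrt (2 * (h - ln h - 1))"
  have "0 < s" using x_minus_ln_gt_1[OF assms] by (simp add: s_def)
  have "s ^ 5 < (\<bar>h - 1\<bar> * rho h) ^ 5"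
    using sqrt_two_x_minus_ln_less[OF assms] \<open>0 < s\<close> unfolding s_def
    by (intro power_strict_mono) auto
  also have "\<dots> = 3 * \<bar>h - 1\<bar> ^ 5 / (h * (2*h + 1))"
    using rho_pow_5[OF assms(1)] by (simp add: power_mult_distrib)
  finally show ?thesis
    using \<open>0 < s\<close> assms unfolding d2j_par_def s_def[symmetric]
    by (simp add: divide_simps mult.commute)
qed

lemma j_par_at_right_1: "(j_par \<longlongrightarrow> -(1/3)) (at_right 1)"
  unfolding j_par_def by real_asymp

lemma j_par_at_left_1: "(j_par \<longlongrightarrow> 1/3) (at_left 1)"
  unfolding j_par_def by real_asymp

lemma dj_par_bigo_at_right_1: "dj_par \<in> O[at_right 1](\<lambda>h. (h - ln h - 1) powr (-1/2))"
  unfolding dj_par_def by real_asymp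

lemma dj_par_bigo_at_left_1: "dj_par \<in> O[at_left 1](\<lambda>h. (h - ln h - 1) powr (-1/2))"
  unfolding dj_par_def by real_asymp

lemma bigo_compose_inverse_x_minus_ln:
  fixes H :: "real \<Rightarrow> real"
  assumes "filterlim H F (at_right 1)" and "\<And>f. 1 < f \<Longrightarrow> H f - ln (H f) = f"
    and "u \<in> O[F](\<lambda>h. (h - ln h - 1) powr (-1/2))"
  shows "(\<lambda>f. u (H f)) \<in> O[at_right 1](\<lambda>f. (f - 1) powr (-1/2))"
proof -
  have ev: "eventually (\<lambda>f. (H f - ln (H f) - 1) powr (-1/2) = (f - 1) powr (-1/2)) (at_right 1)"
    using eventually_at_right_less[of 1] by eventually_elim (simp add: assms(2))
  from landau_o.big.compose[OF assms(3,1)] show ?thesis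
    unfolding landau_o.big.cong[OF ev] .
qed

lemma odd_power_divide_sign:
  fixes c u v :: real
  assumes "c * u = \<bar>u\<bar>" "u \<noteq> 0" "odd n"
  shows "c * v / u ^ n = v / \<bar>u\<bar> ^ n"
proof (cases "0 < u")
  case True
  then have "c = 1" using assms(1) by simp
  then show ?thesis using True by simp
next
  case False
  then have "u < 0" using assms(2) by simp
  then have "c = -1" using assms(1) by (simp add: mult_right_cancel[of u c "-1", symmetric])
  then show ?thesis using \<open>u < 0\<close> assms(3) by (simp add: power_minus_odd)
qed

lemma branch_has_derivative:
  assumes "(S has_real_derivative 1 / S f) (at f)" "S f \<noteq> 0"
    and "(H has_real_derivative H f / (H f - 1)) (at f)" "H f \<noteq> 1"
  shows "((\<lambda>x. c / (H x - 1) - 1 / S x) has_real_derivative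
           1 / S f ^ 3 - c * H f / (H f - 1) ^ 3) (at f)"
proof -
  have "((\<lambda>x. c / (H x - 1) - 1 / S x) has_real_derivative
          - (c * (H f / (H f - 1))) / (H f - 1)^2 + (1 / S f) / S f ^ 2) (at f)"
    using assms by (auto intro!: derivative_eq_intros simp: power2_eq_square)
  then show ?thesis
    by (rule DERIV_cong) (use assms in \<open>simp add: field_simps power2_eq_square power3_eq_cube\<close>)
qed

lemma branch_derivative_has_derivative:
  assumes "(S has_real_derivative 1 / S f) (at f)" "S f \<noteq> 0"
    and "(H has_real_derivative H f / (H f - 1)) (at f)" "H f \<noteq> 1"
  shows "((\<lambda>x. 1 / S x ^ 3 - c * H x / (H x - 1) ^ 3) has_real_derivative
           - 3 / S f ^ 5 + c * H f * (2 * H f + 1) / (H f - 1) ^ 5) (at f)"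
proof -
  have eq: "- (3 * s ^ 2 * (1 / s)) / (s ^ 3) ^ 2
      - (c * (h / (h - 1)) * (h - 1) ^ 3 - c * h * (3 * (h - 1) ^ 2 * (h / (h - 1))))
        / ((h - 1) ^ 3) ^ 2 = - 3 / s ^ 5 + c * h * (2 * h + 1) / (h - 1) ^ 5"
    if "s \<noteq> 0" "h \<noteq> 1" for s h :: real
  proof -
    define u where "u = h - 1"
    have "h = u + 1" "u \<noteq> 0" using that by (simp_all add: u_def)
    then have "(c * (h / (h - 1)) * (h - 1) ^ 3 - c * h * (3 * (h - 1) ^ 2 * (h / (h - 1))))
        / ((h - 1) ^ 3) ^ 2 = - (c * h * (2 * h + 1) / (h - 1) ^ 5)"
      by (simp add: field_simps power2_eq_square power3_eq_cube numeral_eq_Suc)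
    moreover have "(3 * s ^ 2 * (1 / s)) / (s ^ 3) ^ 2 = 3 / s ^ 5"
      using that(1) by (simp add: field_simps numeral_eq_Suc)
    ultimately show ?thesis by simp
  qed
  have "((\<lambda>x. 1 / S x ^ 3 - c * H x / (H x - 1) ^ 3) has_real_derivative
          - (3 * S f ^ 2 * (1 / S f)) / (S f ^ 3) ^ 2
          - (c * (H f / (H f - 1)) * (H f - 1) ^ 3
              - c * H f * (3 * (H f - 1) ^ 2 * (H f / (H f - 1)))) / ((H f - 1) ^ 3) ^ 2) (at f)"
    using assms by (auto intro!: derivative_eq_intros simp: mult_ac)
  then show ?thesis unfolding eq[OF assms(2,4)] .
qed

lemma dj_par_d2j_par_signed:
  assumes "c * (h - 1) = \<bar>h - 1\<bar>" "h \<noteq> 1" "h - ln h = f"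
  shows "dj_par h = 1 / sqrt (2 * (f - 1)) ^ 3 - c * h / (h - 1) ^ 3"
    and "d2j_par h = - 3 / sqrt (2 * (f - 1)) ^ 5 + c * h * (2 * h + 1) / (h - 1) ^ 5"
  using odd_power_divide_sign[OF assms(1), of 3 h]
    odd_power_divide_sign[OF assms(1), of 5 "h * (2 * h + 1)"] assms(2,3)
  by (simp_all add: dj_par_def d2j_par_def mult.assoc)

text \<open>Here c = \<plusminus>1 is the sign of H - 1 on the branch, so that c / (H x - 1) = 1 / |H x - 1|.\<close>

lemma j_branch_has_derivatives:
  fixes H :: "real \<Rightarrow> real"
  assumes H_deriv: "\<And>x. 1 < x \<Longrightarrow> (H has_real_derivative H x / (H x - 1)) (at x)"
    and H_inv: "\<And>x. 1 < x \<Longrightarrow> H x - ln (H x) = x"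
    and sign: "\<And>x. 1 < x \<Longrightarrow> c * (H x - 1) = \<bar>H x - 1\<bar>"
    and "1 < f"
  shows "((\<lambda>x. c / (H x - 1) - 1 / sqrt (2 * (x - 1))) has_real_derivative dj_par (H f)) (at f)"
    and "(deriv (\<lambda>x. c / (H x - 1) - 1 / sqrt (2 * (x - 1))) has_real_derivative d2j_par (H f))
           (at f)"
proof -
  define S where "S x = sqrt (2 * (x - 1))" for x
  have S_deriv: "(S has_real_derivative 1 / S x) (at x)" and S_ne_0: "S x \<noteq> 0" if "1 < x" for x
    using that unfolding S_def by (auto intro!: derivative_eq_intros simp: divide_simps)
  have H_ne_1: "H x \<noteq> 1" if "1 < x" for x
    using H_inv[OF that] that by auto
  have dj_eq: "dj_par (H x) = 1 / S x ^ 3 - c * H x / (H x - 1) ^ 3"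
    and d2j_eq: "d2j_par (H x) = - 3 / S x ^ 5 + c * H x * (2 * H x + 1) / (H x - 1) ^ 5"
    if "1 < x" for x
    unfolding S_def using dj_par_d2j_par_signed[OF sign H_ne_1 H_inv] that by simp_all
  have deriv1: "((\<lambda>x. c / (H x - 1) - 1 / S x) has_real_derivative dj_par (H x)) (at x)"
    if "1 < x" for x
    unfolding dj_eq[OF that]
    by (rule branch_has_derivative[OF S_deriv[OF that] S_ne_0[OF that] H_deriv H_ne_1])
       (use that in auto)
  then show "((\<lambda>x. c / (H x - 1) - 1 / sqrt (2 * (x - 1))) has_real_derivative dj_par (H f)) (at f)"
    using \<open>1 < f\<close> by (simp add: S_def)
  have "(deriv (\<lambda>x. c / (H x - 1) - 1 / S x) has_real_derivative d2j_par (H f)) (at f)"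
  proof (rule has_field_derivative_transform_within_open)
    show "((\<lambda>x. 1 / S x ^ 3 - c * H x / (H x - 1) ^ 3) has_real_derivative d2j_par (H f)) (at f)"
      unfolding d2j_eq[OF \<open>1 < f\<close>]
      by (rule branch_derivative_has_derivative[OF S_deriv S_ne_0 H_deriv H_ne_1])
         (use \<open>1 < f\<close> in auto)
    show "1 / S x ^ 3 - c * H x / (H x - 1) ^ 3 = deriv (\<lambda>x. c / (H x - 1) - 1 / S x) x"
      if "x \<in> {1<..}" for x
      using DERIV_imp_deriv[OF deriv1] dj_eq that by simp
  qed (use \<open>1 < f\<close> in auto)
  then show "(deriv (\<lambda>x. c / (H x - 1) - 1 / sqrt (2 * (x - 1))) has_real_derivative d2j_par (H f))
      (at f)"
    by (simp add: S_def)
qed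

lemma j_up_eq_branch: "j_up = (\<lambda>x. 1 / (h_up x - 1) - 1 / sqrt (2 * (x - 1)))"
  by (simp add: fun_eq_iff j_up_def)

lemma j_lo_eq_branch: "j_lo = (\<lambda>x. (-1) / (h_lo x - 1) - 1 / sqrt (2 * (x - 1)))"
  by (simp add: fun_eq_iff j_lo_def minus_divide_right)

lemma j_up_has_derivatives:
  assumes "1 < f"
  shows "(j_up has_real_derivative dj_par (h_up f)) (at f)"
    and "(deriv j_up has_real_derivative d2j_par (h_up f)) (at f)"
proof -
  have sign: "1 * (h_up x - 1) = \<bar>h_up x - 1\<bar>" if "1 < x" for x
    using h_up_props(1)[OF that] by simp
  show "(j_up has_real_derivative dj_par (h_up f)) (at f)"
    unfolding j_up_eq_branch
    using h_up_has_derivative h_up_props(2) sign assms by (rule j_branch_has_derivatives(1))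
  show "(deriv j_up has_real_derivative d2j_par (h_up f)) (at f)"
    unfolding j_up_eq_branch
    using h_up_has_derivative h_up_props(2) sign assms by (rule j_branch_has_derivatives(2))
qed

lemma j_lo_has_derivatives:
  assumes "1 < f"
  shows "(j_lo has_real_derivative dj_par (h_lo f)) (at f)"
    and "(deriv j_lo has_real_derivative d2j_par (h_lo f)) (at f)"
proof -
  have sign: "-1 * (h_lo x - 1) = \<bar>h_lo x - 1\<bar>" if "1 < x" for x
    using h_lo_props(2)[OF that] by simp
  show "(j_lo has_real_derivative dj_par (h_lo f)) (at f)"
    unfolding j_lo_eq_branch
    using h_lo_has_derivative h_lo_props(3) sign assms by (rule j_branch_has_derivatives(1))
  show "(deriv j_lo has_real_derivative d2j_par (h_lo f)) (at f)"
    unfolding j_lo_eq_branch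
    using h_lo_has_derivative h_lo_props(3) sign assms by (rule j_branch_has_derivatives(2))
qed

lemma deriv_j_up: "1 < f \<Longrightarrow> deriv j_up f = dj_par (h_up f)"
  by (rule DERIV_imp_deriv[OF j_up_has_derivatives(1)])

lemma deriv_j_lo: "1 < f \<Longrightarrow> deriv j_lo f = dj_par (h_lo f)"
  by (rule DERIV_imp_deriv[OF j_lo_has_derivatives(1)])

lemma j_up_eq_j_par: "1 < f \<Longrightarrow> j_up f = j_par (h_up f)"
  using h_up_props[of f] by (simp add: j_up_def j_par_def)

lemma j_lo_eq_j_par: "1 < f \<Longrightarrow> j_lo f = j_par (h_lo f)"
  using h_lo_props[of f] by (simp add: j_lo_def j_par_def)

lemma j_up_at_right_1: "(j_up \<longlongrightarrow> -(1/3)) (at_right 1)"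
proof -
  have "eventually (\<lambda>f. j_par (h_up f) = j_up f) (at_right 1)"
    using eventually_at_right_less[of 1] by eventually_elim (simp add: j_up_eq_j_par)
  then show ?thesis
    using filterlim_compose[OF j_par_at_right_1 h_up_at_right_1] by (rule tendsto_cong[THEN iffD1])
qed

lemma j_lo_at_right_1: "(j_lo \<longlongrightarrow> 1/3) (at_right 1)"
proof -
  have "eventually (\<lambda>f. j_par (h_lo f) = j_lo f) (at_right 1)"
    using eventually_at_right_less[of 1] by eventually_elim (simp add: j_lo_eq_j_par)
  then show ?thesis
    using filterlim_compose[OF j_par_at_left_1 h_lo_at_right_1] by (rule tendsto_cong[THEN iffD1])
qed

lemma deriv_j_up_bigo: "deriv j_up \<in> O[at_right 1](\<lambda>f. (f - 1) powr (-1/2))"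
proof -
  have ev: "eventually (\<lambda>f. dj_par (h_up f) = deriv j_up f) (at_right 1)"
    using eventually_at_right_less[of 1] by eventually_elim (simp add: deriv_j_up)
  from bigo_compose_inverse_x_minus_ln[OF h_up_at_right_1 h_up_props(2) dj_par_bigo_at_right_1]
  show ?thesis unfolding landau_o.big.in_cong[OF ev] .
qed

lemma deriv_j_lo_bigo: "deriv j_lo \<in> O[at_right 1](\<lambda>f. (f - 1) powr (-1/2))"
proof -
  have ev: "eventually (\<lambda>f. dj_par (h_lo f) = deriv j_lo f) (at_right 1)"
    using eventually_at_right_less[of 1] by eventually_elim (simp add: deriv_j_lo)
  from bigo_compose_inverse_x_minus_ln[OF h_lo_at_right_1 h_lo_props(3) dj_par_bigo_at_left_1]
  show ?thesis unfolding landau_o.big.in_cong[OF ev] .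
qed

lemma j_sum_has_derivatives:
  assumes "1 < f"
  shows "((\<lambda>x. j_up x + j_lo x) has_real_derivative dj_par (h_up f) + dj_par (h_lo f)) (at f)"
    and "(deriv (\<lambda>x. j_up x + j_lo x) has_real_derivative d2j_par (h_up f) + d2j_par (h_lo f))
           (at f)"
proof -
  have sum_deriv:
    "((\<lambda>x. j_up x + j_lo x) has_real_derivative dj_par (h_up x) + dj_par (h_lo x)) (at x)"
    if "1 < x" for x
    using j_up_has_derivatives(1)[OF that] j_lo_has_derivatives(1)[OF that] by (rule DERIV_add)
  then show "((\<lambda>x. j_up x + j_lo x) has_real_derivative dj_par (h_up f) + dj_par (h_lo f)) (at f)"
    using assms .
  show "(deriv (\<lambda>x. j_up x + j_lo x) has_real_derivative d2j_par (h_up f) + d2j_par (h_lo f))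
      (at f)"
  proof (rule has_field_derivative_transform_within_open)
    show "((\<lambda>x. deriv j_up x + deriv j_lo x) has_real_derivative
        d2j_par (h_up f) + d2j_par (h_lo f)) (at f)"
      using j_up_has_derivatives(2)[OF assms] j_lo_has_derivatives(2)[OF assms] by (rule DERIV_add)
    show "deriv j_up x + deriv j_lo x = deriv (\<lambda>x. j_up x + j_lo x) x" if "x \<in> {1<..}" for x
      using DERIV_imp_deriv[OF sum_deriv] that by (simp add: deriv_j_up deriv_j_lo)
  qed (use assms in auto)
qed

lemma derivative_signs:
  assumes "(J has_real_derivative D) (at f)" "(deriv J has_real_derivative E) (at f)"
    and "0 < D" "E < 0"
  shows "(J has_real_derivative deriv J f) (at f) \<and> 0 < deriv J f
    \<and> (deriv J has_real_derivative deriv (deriv J) f) (at f) \<and> deriv (deriv J) f < 0"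
  using assms by (simp add: DERIV_imp_deriv)

lemma j_up_derivative_signs:
  assumes "1 < f"
  shows "(j_up has_real_derivative deriv j_up f) (at f) \<and> 0 < deriv j_up f
    \<and> (deriv j_up has_real_derivative deriv (deriv j_up) f) (at f) \<and> deriv (deriv j_up) f < 0"
proof -
  have "0 < dj_par (h_up f)" "d2j_par (h_up f) < 0"
    using h_up_props[OF assms] by (auto intro: dj_par_pos d2j_par_neg)
  then show ?thesis by (rule derivative_signs[OF j_up_has_derivatives[OF assms]])
qed

lemma j_lo_derivative_signs:
  assumes "1 < f"
  shows "(j_lo has_real_derivative deriv j_lo f) (at f) \<and> 0 < deriv j_lo f
    \<and> (deriv j_lo has_real_derivative deriv (deriv j_lo) f) (at f) \<and> deriv (deriv j_lo) f < 0"
proof -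
  have "0 < dj_par (h_lo f)" "d2j_par (h_lo f) < 0"
    using h_lo_props[OF assms] by (auto intro: dj_par_pos d2j_par_neg)
  then show ?thesis by (rule derivative_signs[OF j_lo_has_derivatives[OF assms]])
qed

lemma j_sum_derivative_signs:
  assumes "1 < f"
  shows "((\<lambda>x. j_up x + j_lo x) has_real_derivative deriv (\<lambda>x. j_up x + j_lo x) f) (at f)
    \<and> 0 < deriv (\<lambda>x. j_up x + j_lo x) f
    \<and> (deriv (\<lambda>x. j_up x + j_lo x) has_real_derivative deriv (deriv (\<lambda>x. j_up x + j_lo x)) f) (at f)
    \<and> deriv (deriv (\<lambda>x. j_up x + j_lo x)) f < 0"
proof -
  have "0 < dj_par (h_up f) + dj_par (h_lo f)" "d2j_par (h_up f) + d2j_par (h_lo f) < 0"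
    using h_up_props[OF assms] h_lo_props[OF assms]
    by (auto intro!: add_pos_pos add_neg_neg dj_par_pos d2j_par_neg)
  then show ?thesis by (rule derivative_signs[OF j_sum_has_derivatives[OF assms]])
qed

lemma deriv_j_sum_bigo: "deriv (\<lambda>x. j_up x + j_lo x) \<in> O[at_right 1](\<lambda>f. (f - 1) powr (-1/2))"
proof -
  have ev: "eventually (\<lambda>f. deriv j_up f + deriv j_lo f = deriv (\<lambda>x. j_up x + j_lo x) f)
      (at_right 1)"
    using eventually_at_right_less[of 1]
    by eventually_elim
       (simp add: deriv_j_up deriv_j_lo DERIV_imp_deriv[OF j_sum_has_derivatives(1)])
  from sum_in_bigo(1)[OF deriv_j_up_bigo deriv_j_lo_bigo] show ?thesis
    unfolding landau_o.big.in_cong[OF ev] .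
qed

lemma j_sum_strict_mono:
  assumes "1 < a" "a < b"
  shows "j_up a + j_lo a < j_up b + j_lo b"
proof (rule DERIV_pos_imp_increasing_open[OF assms(2)])
  fix x assume "a < x" "x < b"
  then show "\<exists>y. ((\<lambda>x. j_up x + j_lo x) has_real_derivative y) (at x) \<and> 0 < y"
    using j_sum_derivative_signs[of x] assms by auto
next
  have "isCont (\<lambda>x. j_up x + j_lo x) x" if "x \<in> {a..b}" for x
    using j_sum_derivative_signs[of x] that assms by (auto intro: DERIV_isCont)
  then show "continuous_on {a..b} (\<lambda>x. j_up x + j_lo x)"
    by (rule continuous_at_imp_continuous_on[OF ballI])
qed

lemma j_sum_at_right_1: "((\<lambda>x. j_up x + j_lo x) \<longlongrightarrow> 0) (at_right 1)"
  using tendsto_add[OF j_up_at_right_1 j_lo_at_right_1] by simp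

lemma j_sum_at_top: "((\<lambda>x. j_up x + j_lo x) \<longlongrightarrow> 1) at_top"
proof -
  have "((\<lambda>f. 1 / (h_up f - 1)) \<longlongrightarrow> 0) at_top"
  proof (rule tendsto_sandwich[of "\<lambda>_. 0" _ _ "\<lambda>f. 1 / (f - 1)"])
    show "eventually (\<lambda>f. 0 \<le> 1 / (h_up f - 1)) at_top"
      using eventually_gt_at_top[of 1] by eventually_elim (use h_up_props in force)
    show "eventually (\<lambda>f. 1 / (h_up f - 1) \<le> 1 / (f - 1)) at_top"
      using eventually_gt_at_top[of 1]
    proof eventually_elim
      case (elim f)
      then have "f \<le> h_up f" using h_up_props[OF elim] ln_gt_zero[of "h_up f"] by linarith
      then show ?case using elim by (simp add: divide_simps)
    qed
  qed (simp, real_asymp)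
  moreover have "(h_lo \<longlongrightarrow> 0) at_top"
  proof (rule tendsto_sandwich[of "\<lambda>_. 0" _ _ "\<lambda>f. exp (1 - f)"])
    show "eventually (\<lambda>f. 0 \<le> h_lo f) at_top"
      using eventually_gt_at_top[of 1] by eventually_elim (use h_lo_props in force)
    show "eventually (\<lambda>f. h_lo f \<le> exp (1 - f)) at_top"
      using eventually_gt_at_top[of 1]
    proof eventually_elim
      case (elim f)
      have "h_lo f = exp (ln (h_lo f))" using h_lo_props(1)[OF elim] by simp
      also have "\<dots> = exp (h_lo f - f)" using h_lo_props(3)[OF elim] by simp
      also have "\<dots> \<le> exp (1 - f)" using h_lo_props(2)[OF elim] by simp
      finally show ?case .
    qed
  qed (simp, real_asymp)
  moreover have "((\<lambda>f. 1 / sqrt (2 * (f - 1))) \<longlongrightarrow> (0::real)) at_top" by real_asymp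
  ultimately have "((\<lambda>f. (1 / (h_up f - 1) - 1 / sqrt (2 * (f - 1)))
      + (1 / (1 - h_lo f) - 1 / sqrt (2 * (f - 1)))) \<longlongrightarrow> (0 - 0) + (1 / (1 - 0) - 0)) at_top"
    by (intro tendsto_intros) auto
  then show ?thesis by (simp add: j_up_def j_lo_def)
qed

lemma j_sum_bounds:
  assumes "1 < f"
  shows "0 < j_up f + j_lo f \<and> j_up f + j_lo f < 1"
proof
  have "0 \<le> j_up ((1 + f) / 2) + j_lo ((1 + f) / 2)"
  proof (rule tendsto_upperbound[OF j_sum_at_right_1])
    show "eventually (\<lambda>x. j_up x + j_lo x \<le> j_up ((1 + f) / 2) + j_lo ((1 + f) / 2)) (at_right 1)"
      using eventually_at_right_real[of 1 "(1 + f) / 2"] assms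
      by (auto elim!: eventually_mono intro!: less_imp_le j_sum_strict_mono)
  qed simp
  then show "0 < j_up f + j_lo f"
    using j_sum_strict_mono[of "(1 + f) / 2" f] assms by simp
  have "j_up (f + 1) + j_lo (f + 1) \<le> 1"
  proof (rule tendsto_lowerbound[OF j_sum_at_top])
    show "eventually (\<lambda>x. j_up (f + 1) + j_lo (f + 1) \<le> j_up x + j_lo x) at_top"
      using eventually_gt_at_top[of "f + 1"]
      by eventually_elim (use j_sum_strict_mono[of "f + 1"] assms in force)
  qed simp
  then show "j_up f + j_lo f < 1"
    using j_sum_strict_mono[of f "f + 1"] assms by simp
qed

lemma j_sum_eq:
  assumes "1 < f"
  shows "j_up f + j_lo f = 1 / (h_up f - 1) + 1 / (1 - h_lo f) - sqrt (2 / (f - 1))"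
proof -
  have "1 / sqrt (2 * (f - 1)) + 1 / sqrt (2 * (f - 1)) = sqrt 2 * sqrt 2 / (sqrt 2 * sqrt (f - 1))"
    unfolding real_sqrt_mult by simp
  also have "\<dots> = sqrt 2 / sqrt (f - 1)"
    by (rule nonzero_mult_divide_mult_cancel_left) simp
  also have "\<dots> = sqrt (2 / (f - 1))"
    by (simp add: real_sqrt_divide)
  finally show ?thesis by (simp add: j_up_def j_lo_def)
qed

theorem lemma2p3:
  shows
   \<comment> \<open>(a)\<close>
   "(j_up \<longlongrightarrow> -(1/3)) (at_right 1) \<and> (j_lo \<longlongrightarrow> 1/3) (at_right 1)
   \<comment> \<open>(b)\<close>
    \<and> (\<forall>f>1. (j_up has_real_derivative deriv j_up f) (at f) \<and> deriv j_up f > 0)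
    \<and> (\<forall>f>1. (j_lo has_real_derivative deriv j_lo f) (at f) \<and> deriv j_lo f > 0)
    \<and> deriv j_up \<in> O[at_right 1](\<lambda>f. (f - 1) powr (-1/2))
    \<and> deriv j_lo \<in> O[at_right 1](\<lambda>f. (f - 1) powr (-1/2))
   \<comment> \<open>(c)\<close>
    \<and> (\<forall>f>1. (deriv j_up has_real_derivative deriv (deriv j_up) f) (at f)
              \<and> deriv (deriv j_up) f < 0)
    \<and> (\<forall>f>1. (deriv j_lo has_real_derivative deriv (deriv j_lo) f) (at f)
              \<and> deriv (deriv j_lo) f < 0)
   \<comment> \<open>(d)\<close>
    \<and> (\<forall>f>1. j_up f + j_lo f = 1 / (h_up f - 1) + 1 / (1 - h_lo f) - sqrt (2 / (f - 1)))
    \<and> (\<forall>f>1. ((\<lambda>x. j_up x + j_lo x) has_real_derivative deriv (\<lambda>x. j_up x + j_lo x) f) (at f)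
              \<and> deriv (\<lambda>x. j_up x + j_lo x) f > 0)
    \<and> (\<forall>f>1. (deriv (\<lambda>x. j_up x + j_lo x) has_real_derivative
                 deriv (deriv (\<lambda>x. j_up x + j_lo x)) f) (at f)
              \<and> deriv (deriv (\<lambda>x. j_up x + j_lo x)) f < 0)
    \<and> ((\<lambda>x. j_up x + j_lo x) \<longlongrightarrow> 0) (at_right 1)
    \<and> deriv (\<lambda>x. j_up x + j_lo x) \<in> O[at_right 1](\<lambda>f. (f - 1) powr (-1/2))
   \<comment> \<open>(e)\<close>
    \<and> (\<forall>f>1. 0 < j_up f + j_lo f \<and> j_up f + j_lo f < 1)"
  using j_up_at_right_1 j_lo_at_right_1 j_sum_at_right_1
    j_up_derivative_signs j_lo_derivative_signs j_sum_derivative_signs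
    deriv_j_up_bigo deriv_j_lo_bigo deriv_j_sum_bigo j_sum_eq j_sum_bounds
  by simp

end
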